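(* Let $M_1=\{(t,0,0):t\in\mathbb{R}\}$ and $M_2=\{(0,t,1):t\in\mathbb{R}\}$. There exists $r_0>1$ such that every $\overline B_{r_0}$-ruled set $A\subset\mathbb H$ with $(M_1\cup M_2)\cap\overline B_{r_0}\subset A$ has nonempty interior.
   Context: $\mathbb H$ is $\mathbb{R}^3$ with product $uv=u+v+\frac12(x(u)y(v)-y(u)x(v))(0,0,1)$; a horizontal line is a set $w\{t h: t\in\mathbb{R}\}$ with $w\in\mathbb H$ and $h\in\langle(1,0,0),(0,1,0)\rangle\setminus\{0\}$. $d$ is the Carnot–Carathéodory metric, $B_r$ the closed $d$-ball of radius $r$ about $(0,0,0)$, and $\overline B_r$ its convex hull in $\mathbb{R}^3$. For a convex open (or convex) set $U\subset\mathbb H$, a set $A$ is $U$-ruled if for every horizontal line $L$ such that $L\cap U$ contains two distinct points of $A$, we have $L\cap U\subset A$. *)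

theory Defs
  imports "HOL-Analysis.Analysis"
begin

type_synonym heis = "real \<times> real \<times> real"

definition hx :: "heis \<Rightarrow> real" where "hx p = fst p"
definition hy :: "heis \<Rightarrow> real" where "hy p = fst (snd p)"
definition hz :: "heis \<Rightarrow> real" where "hz p = snd (snd p)"

definition hmul :: "heis \<Rightarrow> heis \<Rightarrow> heis" where
  "hmul u v = u + v + ((hx u * hy v - hy u * hx v) / 2) *\<^sub>R (0, 0, 1)"

definition horizontal_line :: "heis set \<Rightarrow> bool" where
  "horizontal_line L \<longleftrightarrow> (\<exists>w a b. (a, b) \<noteq> (0::real, 0::real) \<and>
      L = {hmul w (t * a, t * b, 0) | t. t \<in> (UNIV :: real set)})"

text \<open>Horizontal C^1 curves on [0,1]: velocity lies in the left-invariant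
  horizontal distribution spanned by X = d_x - y/2 d_z, Y = d_y + x/2 d_z.\<close>
definition horiz_curve :: "(real \<Rightarrow> heis) \<Rightarrow> bool" where
  "horiz_curve g \<longleftrightarrow> (\<exists>g'. continuous_on {0..1} g' \<and>
     (\<forall>t\<in>{0..1}. (g has_vector_derivative g' t) (at t within {0..1})) \<and>
     (\<forall>t\<in>{0..1}. hz (g' t) = (hx (g t) * hy (g' t) - hy (g t) * hx (g' t)) / 2))"

definition cc_length :: "(real \<Rightarrow> heis) \<Rightarrow> real" where
  "cc_length g = integral {0..1} (\<lambda>t.
      sqrt ((hx (vector_derivative g (at t within {0..1})))\<^sup>2
          + (hy (vector_derivative g (at t within {0..1})))\<^sup>2))"

definition cc_dist :: "heis \<Rightarrow> heis \<Rightarrow> real" where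
  "cc_dist p q = Inf {cc_length g | g. horiz_curve g \<and> g 0 = p \<and> g 1 = q}"

definition cc_ball :: "real \<Rightarrow> heis set" where
  "cc_ball r = {p. cc_dist (0, 0, 0) p \<le> r}"

definition cc_ball_hull :: "real \<Rightarrow> heis set" where
  "cc_ball_hull r = convex hull (cc_ball r)"

definition ruled :: "heis set \<Rightarrow> heis set \<Rightarrow> bool" where
  "ruled U A \<longleftrightarrow> (\<forall>L. horizontal_line L \<longrightarrow>
      (\<exists>p q. p \<in> L \<inter> U \<inter> A \<and> q \<in> L \<inter> U \<inter> A \<and> p \<noteq> q) \<longrightarrow> L \<inter> U \<subseteq> A)"

definition M1 :: "heis set" where "M1 = {(t, 0, 0) | t. t \<in> (UNIV :: real set)}"
definition M2 :: "heis set" where "M2 = {(0, t, 1) | t. t \<in> (UNIV :: real set)}"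

end

theory Submission
  imports Defs
begin

text \<open>The saddle 2 z (1 - z) = x y is ruled by the horizontal lines joining (s, 0, 0) \<in> M1
  to (0, 2/s, 1) \<in> M2, so a ruled set containing M1 and M2 contains a patch of it. The horizontal
  line through a point P in direction (1, 0, 0) meets that patch twice for all P in a nonempty open
  set, and such P then lie in the ruled set as well. The convex hull of a CC ball of radius 110
  contains the box (-5, 5)^3, which is large enough to hold all points involved.\<close>

lemma cc_length_nonneg: "0 \<le> cc_length g"
  unfolding cc_length_def
  by (cases "(\<lambda>t. sqrt ((hx (vector_derivative g (at t within {0..1})))\<^sup>2
      + (hy (vector_derivative g (at t within {0..1})))\<^sup>2)) integrable_on {0..1}")
    (auto intro: integral_nonneg simp: not_integrable_integral)

lemma cc_dist_le_cc_length:
  assumes "horiz_curve g" and "g 0 = p" and "g 1 = q"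
  shows "cc_dist p q \<le> cc_length g"
  unfolding cc_dist_def using assms cc_length_nonneg
  by (intro cInf_lower bdd_belowI[of _ 0]) auto

lemma cc_length_eq_integral:
  assumes "\<And>t. t \<in> {0..1} \<Longrightarrow> (g has_vector_derivative g' t) (at t)"
  shows "cc_length g = integral {0..1} (\<lambda>t. sqrt ((hx (g' t))\<^sup>2 + (hy (g' t))\<^sup>2))"
  unfolding cc_length_def
proof (rule integral_cong)
  fix t :: real assume "t \<in> {0..1}"
  then have "vector_derivative g (at t within {0..1}) = g' t"
    using vector_derivative_at_within_ivl[OF assms] by auto
  then show "sqrt ((hx (vector_derivative g (at t within {0..1})))\<^sup>2
      + (hy (vector_derivative g (at t within {0..1})))\<^sup>2) = sqrt ((hx (g' t))\<^sup>2 + (hy (g' t))\<^sup>2)"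
    by simp
qed

text \<open>The witness is the horizontal lift of the planar parabola t \<mapsto> (X t, B t + D t^2);
  the coefficient D is chosen so that the enclosed area brings the lift to height Z.\<close>
lemma cc_dist_origin_le:
  fixes X Y Z :: real
  assumes "X \<noteq> 0"
  shows "cc_dist (0, 0, 0) (X, Y, Z) \<le> \<bar>X\<bar> + \<bar>Y - 6 * Z / X\<bar> + 2 * \<bar>6 * Z / X\<bar>"
proof -
  define D where "D = 6 * Z / X"
  define B where "B = Y - D"
  define g where "g = (\<lambda>t::real. (X * t, B * t + D * t\<^sup>2, X * D * t ^ 3 / 6))"
  define g' where "g' = (\<lambda>t::real. (X, B + 2 * D * t, X * D * t\<^sup>2 / 2))"
  have der: "(g has_vector_derivative g' t) (at t)" for t
    unfolding g_def g'_def
    by (auto intro!: derivative_eq_intros simp: power2_eq_square power3_eq_cube algebra_simps)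
  have "horiz_curve g"
    unfolding horiz_curve_def
  proof (intro exI[of _ g'] conjI ballI)
    show "continuous_on {0..1} g'" unfolding g'_def by (intro continuous_intros) auto
    show "(g has_vector_derivative g' t) (at t within {0..1})" for t
      using der has_vector_derivative_at_within by blast
    show "hz (g' t) = (hx (g t) * hy (g' t) - hy (g t) * hx (g' t)) / 2" for t
      by (simp add: g_def g'_def hx_def hy_def hz_def power2_eq_square algebra_simps)
  qed
  moreover have "g 0 = (0, 0, 0)" "g 1 = (X, Y, Z)"
    using assms by (simp_all add: g_def D_def B_def)
  ultimately have "cc_dist (0, 0, 0) (X, Y, Z) \<le> cc_length g"
    by (rule cc_dist_le_cc_length)
  also have "\<dots> = integral {0..1} (\<lambda>t. sqrt (X\<^sup>2 + (B + 2 * D * t)\<^sup>2))"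
    using cc_length_eq_integral[OF der] by (simp add: g'_def hx_def hy_def)
  also have "\<dots> \<le> integral {0..1} (\<lambda>t::real. \<bar>X\<bar> + \<bar>B\<bar> + 2 * \<bar>D\<bar>)"
  proof (rule integral_le)
    show "(\<lambda>t. sqrt (X\<^sup>2 + (B + 2 * D * t)\<^sup>2)) integrable_on {0..1}"
      by (intro integrable_continuous_interval continuous_intros)
    fix t :: real assume t: "t \<in> {0..1}"
    have "sqrt (X\<^sup>2 + (B + 2 * D * t)\<^sup>2) \<le> \<bar>X\<bar> + \<bar>B + 2 * D * t\<bar>"
      by (rule real_le_lsqrt) (simp_all add: power2_sum)
    also have "\<bar>B + 2 * D * t\<bar> \<le> \<bar>B\<bar> + 2 * \<bar>D\<bar>"
    proof -
      have "\<bar>D * t\<bar> \<le> \<bar>D\<bar>" using t by (simp add: abs_mult mult_left_le)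
      then show ?thesis by linarith
    qed
    finally show "sqrt (X\<^sup>2 + (B + 2 * D * t)\<^sup>2) \<le> \<bar>X\<bar> + \<bar>B\<bar> + 2 * \<bar>D\<bar>"
      by simp
  qed (rule integrable_const_ivl)
  finally show ?thesis by (simp add: B_def D_def)
qed

definition open_box :: "heis set" where
  "open_box = {-5<..<5} \<times> {-5<..<5} \<times> {-5<..<5}"

lemma mem_open_box: "(x, y, z) \<in> open_box \<longleftrightarrow> \<bar>x\<bar> < 5 \<and> \<bar>y\<bar> < 5 \<and> \<bar>z\<bar> < 5"
  by (auto simp: open_box_def abs_less_iff)

lemma open_open_box: "open open_box"
  unfolding open_box_def by (intro open_Times open_greaterThanLessThan)

text \<open>A box point is the midpoint of its two translates by \<plusminus>6 in x, which lie away from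
  the plane x = 0 where the estimate of \<open>cc_dist_origin_le\<close> degenerates.\<close>
lemma open_box_subset_cc_ball_hull: "open_box \<subseteq> cc_ball_hull 110"
proof
  fix p assume "p \<in> open_box"
  then obtain x y z where p: "p = (x, y, z)" and box: "\<bar>x\<bar> < 5" "\<bar>y\<bar> < 5" "\<bar>z\<bar> < 5"
    by (cases p) (auto simp: mem_open_box)
  have in_hull: "(X, y, z) \<in> convex hull cc_ball 110" if X: "1 \<le> \<bar>X\<bar>" "\<bar>X\<bar> \<le> 11" for X
  proof (rule hull_inc)
    have "\<bar>6 * z / X\<bar> \<le> 6 * \<bar>z\<bar>"
      using X mult_left_mono[of 1 "\<bar>X\<bar>" "\<bar>z\<bar>"] by (simp add: abs_divide abs_mult divide_le_eq)
    then have "\<bar>X\<bar> + \<bar>y - 6 * z / X\<bar> + 2 * \<bar>6 * z / X\<bar> \<le> 110"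
      using X box by linarith
    moreover have "X \<noteq> 0" using X by auto
    ultimately show "(X, y, z) \<in> cc_ball 110"
      unfolding cc_ball_def using cc_dist_origin_le[of X y z] by simp
  qed
  have "(1/2) *\<^sub>R (x + 6, y, z) + (1/2) *\<^sub>R (x - 6, y, z) \<in> convex hull cc_ball 110"
    using box by (intro convexD[OF convex_convex_hull] in_hull) auto
  then show "p \<in> cc_ball_hull 110"
    by (simp add: p cc_ball_hull_def field_simps)
qed

lemma hmul_horizontal:
  "hmul (x, y, z) (t * a, t * b, 0) = (x + t * a, y + t * b, z + t * (x * b - y * a) / 2)"
  by (simp add: hmul_def hx_def hy_def algebra_simps)

lemma ruled_horizontal_line:
  assumes "ruled U A" and "(a, b) \<noteq> (0, 0)" and "t1 \<noteq> t2"
    and "hmul w (t1 * a, t1 * b, 0) \<in> U \<inter> A" and "hmul w (t2 * a, t2 * b, 0) \<in> U \<inter> A"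
    and "hmul w (t * a, t * b, 0) \<in> U"
  shows "hmul w (t * a, t * b, 0) \<in> A"
proof -
  define L where "L = {hmul w (s * a, s * b, 0) | s. s \<in> (UNIV :: real set)}"
  have "horizontal_line L"
    unfolding horizontal_line_def L_def using assms(2) by blast
  moreover have "hmul w (t1 * a, t1 * b, 0) \<noteq> hmul w (t2 * a, t2 * b, 0)"
    using assms(2,3) by (cases w) (auto simp: hmul_horizontal)
  ultimately show ?thesis
    using assms(1,4-6) unfolding ruled_def L_def by blast
qed

text \<open>Points of the saddle whose ruling line meets M1 and M2 inside the box.\<close>
definition admissible :: "heis set" where
  "admissible = {q \<in> open_box. \<bar>hx q\<bar> < 5 * \<bar>1 - hz q\<bar> \<and> 2 * \<bar>1 - hz q\<bar> < 5 * \<bar>hx q\<bar>}"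

lemma ruled_contains_saddle_point:
  assumes "ruled U A" and "(M1 \<union> M2) \<inter> U \<subseteq> A" and "open_box \<subseteq> U"
    and q: "q \<in> admissible" and saddle: "2 * hz q * (1 - hz q) = hx q * hy q"
  shows "q \<in> A"
proof -
  obtain x y z where q_eq: "q = (x, y, z)" by (cases q)
  have box: "\<bar>x\<bar> < 5" "\<bar>y\<bar> < 5" "\<bar>z\<bar> < 5"
    and bounds: "\<bar>x\<bar> < 5 * \<bar>1 - z\<bar>" "2 * \<bar>1 - z\<bar> < 5 * \<bar>x\<bar>"
    using q by (auto simp: admissible_def mem_open_box q_eq hx_def hz_def)
  have "x \<noteq> 0" "1 - z \<noteq> 0" using bounds by auto
  define s where "s = x / (1 - z)"
  have "\<bar>2 - 2 * z\<bar> = 2 * \<bar>1 - z\<bar>" by (simp add: abs_if)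
  then have s: "s \<noteq> 0" "\<bar>s\<bar> < 5" "\<bar>2 / s\<bar> < 5"
    using \<open>x \<noteq> 0\<close> \<open>1 - z \<noteq> 0\<close> bounds
    by (auto simp: s_def abs_divide divide_less_eq abs_mult)
  have "y = 2 * z / s"
    using saddle \<open>x \<noteq> 0\<close> \<open>1 - z \<noteq> 0\<close> by (simp add: q_eq hx_def hy_def hz_def s_def field_simps)
  have line: "hmul (s, 0, 0) (t * - s, t * (2 / s), 0) = (s * (1 - t), 2 * t / s, t)" for t
    unfolding hmul_horizontal using s(1) by (simp add: algebra_simps)
  have "(s, 0, 0) \<in> U" "(0, 2 / s, 1) \<in> U"
    using assms(3) s by (auto simp: mem_open_box)
  then have "(s, 0, 0) \<in> U \<inter> A" "(0, 2 / s, 1) \<in> U \<inter> A"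
    using assms(2) by (auto simp: M1_def M2_def)
  moreover have "q = (s * (1 - z), 2 * z / s, z)"
    using \<open>1 - z \<noteq> 0\<close> \<open>y = 2 * z / s\<close> by (simp add: q_eq s_def)
  moreover have "q \<in> U" using assms(3) box by (auto simp: q_eq mem_open_box)
  ultimately show ?thesis
    using ruled_horizontal_line[OF assms(1), of "-s" "2 / s" 0 1 "(s, 0, 0)" z, unfolded line] s(1)
    by simp
qed

text \<open>The two parameters at which the horizontal line through P in direction (1,0,0) meets
  the saddle 2 z (1 - z) = x y; they are real and distinct when the discriminant is positive.\<close>
definition saddle_param :: "real \<Rightarrow> heis \<Rightarrow> real" where
  "saddle_param \<sigma> P = (-2 * (1 - hz P) + \<sigma> * sqrt (2 * (2 - 2 * hz P - hx P * hy P))) / hy P"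

definition saddle_hit :: "real \<Rightarrow> heis \<Rightarrow> heis" where
  "saddle_hit \<sigma> P = hmul P (saddle_param \<sigma> P, 0, 0)"

lemma saddle_hit_eq:
  "saddle_hit \<sigma> (x, y, z) = (x + saddle_param \<sigma> (x, y, z), y, z - y * saddle_param \<sigma> (x, y, z) / 2)"
  using hmul_horizontal[of x y z "saddle_param \<sigma> (x, y, z)" 1 0] by (simp add: saddle_hit_def)

lemma saddle_hit_on_saddle:
  assumes "hy P \<noteq> 0" and "0 \<le> 2 - 2 * hz P - hx P * hy P" and "\<sigma>\<^sup>2 = 1"
  shows "2 * hz (saddle_hit \<sigma> P) * (1 - hz (saddle_hit \<sigma> P)) = hx (saddle_hit \<sigma> P) * hy (saddle_hit \<sigma> P)"
proof -
  obtain x y z where P: "P = (x, y, z)" by (cases P)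
  define S where "S = sqrt (2 * (2 - 2 * z - x * y))"
  define u where "u = y * saddle_param \<sigma> P"
  have "y \<noteq> 0" using assms(1) by (simp add: P hy_def)
  then have u: "u = -2 * (1 - z) + \<sigma> * S"
    by (simp add: u_def saddle_param_def P hx_def hy_def hz_def S_def)
  have "(\<sigma> * S)\<^sup>2 = 2 * (2 - 2 * z - x * y)"
    using assms(2,3) by (simp add: S_def power_mult_distrib P hx_def hy_def hz_def)
  moreover have "2 * (z - u / 2) * (1 - (z - u / 2)) - (x * y + u)
      = ((\<sigma> * S)\<^sup>2 - 2 * (2 - 2 * z - x * y)) * (-1 / 2)"
    unfolding u by (simp add: power2_eq_square field_simps)
  ultimately have "2 * (z - u / 2) * (1 - (z - u / 2)) = x * y + u"
    by simp
  then show ?thesis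
    by (simp add: P saddle_hit_eq hx_def hy_def hz_def u_def algebra_simps)
qed

definition saddle_cover :: "heis set" where
  "saddle_cover = {P \<in> open_box. 0 < hy P \<and> 0 < 2 - 2 * hz P - hx P * hy P
      \<and> saddle_hit 1 P \<in> admissible \<and> saddle_hit (-1) P \<in> admissible}"

lemma ruled_contains_saddle_cover:
  assumes "ruled U A" and "(M1 \<union> M2) \<inter> U \<subseteq> A" and "open_box \<subseteq> U"
  shows "saddle_cover \<subseteq> A"
proof
  fix P assume P: "P \<in> saddle_cover"
  then have y: "0 < hy P" and disc: "0 < 2 - 2 * hz P - hx P * hy P"
    by (auto simp: saddle_cover_def)
  have hit: "hmul P (saddle_param \<sigma> P * 1, saddle_param \<sigma> P * 0, 0) \<in> U \<inter> A"
    if "\<sigma>\<^sup>2 = 1" "saddle_hit \<sigma> P \<in> admissible" for \<sigma>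
    using ruled_contains_saddle_point[OF assms that(2) saddle_hit_on_saddle[OF _ _ that(1)]]
      y disc that(2) assms(3)
    by (auto simp: saddle_hit_def admissible_def)
  have hit_plus: "hmul P (saddle_param 1 P * 1, saddle_param 1 P * 0, 0) \<in> U \<inter> A"
    using P by (intro hit) (simp_all add: saddle_cover_def)
  have hit_minus: "hmul P (saddle_param (-1) P * 1, saddle_param (-1) P * 0, 0) \<in> U \<inter> A"
    using P by (intro hit) (simp_all add: saddle_cover_def)
  have "saddle_param 1 P - saddle_param (-1) P = 2 * sqrt (2 * (2 - 2 * hz P - hx P * hy P)) / hy P"
    unfolding saddle_param_def by (simp add: diff_divide_distrib[symmetric])
  then have "saddle_param 1 P \<noteq> saddle_param (-1) P"
    using y disc by auto
  moreover have P_eq: "hmul P (0 * 1, 0 * 0, 0) = P"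
    by (simp add: hmul_def hx_def hy_def zero_prod_def)
  moreover have "P \<in> U"
    using P assms(3) by (auto simp: saddle_cover_def)
  ultimately have "hmul P (0 * 1, 0 * 0, 0) \<in> A"
    by (intro ruled_horizontal_line[OF assms(1) _ _ hit_plus hit_minus]) auto
  then show "P \<in> A" by (simp only: P_eq)
qed

lemma open_admissible: "open admissible"
proof -
  have "open (open_box \<inter> {q. \<bar>hx q\<bar> < 5 * \<bar>1 - hz q\<bar>} \<inter> {q. 2 * \<bar>1 - hz q\<bar> < 5 * \<bar>hx q\<bar>})"
    unfolding hx_def hz_def by (intro open_Int open_open_box open_Collect_less continuous_intros)
  then show ?thesis
    by (simp add: admissible_def Collect_conj_eq Int_assoc)
qed

lemma continuous_on_saddle_hit: "continuous_on {P. hy P \<noteq> 0} (saddle_hit \<sigma>)"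
  unfolding saddle_hit_def saddle_param_def hmul_def hx_def hy_def hz_def
  by (intro continuous_intros) auto

lemma open_saddle_cover: "open saddle_cover"
proof -
  define V where "V = open_box \<inter> {P. 0 < hy P} \<inter> {P. 0 < 2 - 2 * hz P - hx P * hy P}"
  have "open V"
    unfolding V_def hx_def hy_def hz_def
    by (simp add: open_open_box open_Int open_Collect_less continuous_intros)
  moreover have "continuous_on V (saddle_hit \<sigma>)" for \<sigma>
    by (rule continuous_on_subset[OF continuous_on_saddle_hit]) (auto simp: V_def)
  ultimately have hit_open: "open (saddle_hit \<sigma> -` admissible \<inter> V)" for \<sigma>
    using continuous_on_open_vimage open_admissible by blast
  have cover_eq: "saddle_cover = (saddle_hit 1 -` admissible \<inter> V) \<inter> (saddle_hit (-1) -` admissible \<inter> V)"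
    by (auto simp: saddle_cover_def V_def)
  show ?thesis
    unfolding cover_eq by (intro open_Int hit_open)
qed

lemma saddle_cover_nonempty: "(0, 1, 3/4) \<in> saddle_cover"
proof -
  have "sqrt (2 * (2 - 2 * (3/4) - 0 * 1)) = (1 :: real)" by simp
  then have "saddle_param 1 (0, 1, 3/4) = 1/2" "saddle_param (-1) (0, 1, 3/4) = -3/2"
    by (simp_all add: saddle_param_def hx_def hy_def hz_def)
  then show ?thesis
    by (simp add: saddle_cover_def saddle_hit_eq admissible_def mem_open_box hx_def hy_def hz_def)
qed

theorem mainTheorem18:
  shows "\<exists>r0 > 1. \<forall>A :: heis set.
           ruled (cc_ball_hull r0) A \<and> (M1 \<union> M2) \<inter> cc_ball_hull r0 \<subseteq> A
           \<longrightarrow> interior A \<noteq> {}"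
proof (intro exI[of _ 110] conjI allI impI)
  fix A :: "heis set"
  assume "ruled (cc_ball_hull 110) A \<and> (M1 \<union> M2) \<inter> cc_ball_hull 110 \<subseteq> A"
  then have "saddle_cover \<subseteq> A"
    using ruled_contains_saddle_cover[OF _ _ open_box_subset_cc_ball_hull] by blast
  then have "saddle_cover \<subseteq> interior A"
    using open_saddle_cover by (rule interior_maximal)
  then show "interior A \<noteq> {}"
    using saddle_cover_nonempty by blast
qed simp

end
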